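(* Let $k$ be a positive integer. In any prime $k$th-power distance labeling of the complete graph $K_4$, the four vertex labels do not all have the same parity.
   Context: A prime $k$th-power distance labeling of a graph $G$ is an injective map $L:V(G)\to\mathbb{Z}$ such that for every edge $uv$ of $G$, $|L(u)-L(v)|=p^j$ for some prime $p$ and some positive integer $j\le k$. *)

theory Defs
  imports "HOL-Computational_Algebra.Primes"
begin

definition prime_kth_power_distance_labeling ::
  "'a set \<Rightarrow> ('a \<Rightarrow> 'a \<Rightarrow> bool) \<Rightarrow> nat \<Rightarrow> ('a \<Rightarrow> int) \<Rightarrow> bool" where
  "prime_kth_power_distance_labeling V E k L \<longleftrightarrow>
     inj_on L V \<and>
     (\<forall>u\<in>V. \<forall>v\<in>V. E u v \<longrightarrow>
        (\<exists>p j. prime (p::nat) \<and> 1 \<le> j \<and> j \<le> k \<and> \<bar>L u - L v\<bar> = int p ^ j))"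

definition complete_edges :: "'a \<Rightarrow> 'a \<Rightarrow> bool" where
  "complete_edges u v \<longleftrightarrow> u \<noteq> v"

end

theory Submission
  imports Defs
begin

text \<open>If all four labels have the same parity, every distance is an even prime power, hence a
  power of two. Among four integers \<open>a < b < c < d\<close> with pairwise distances powers of two,
  \<open>2^x + 2^y = 2^z\<close> forces \<open>x = y\<close>, so \<open>b - a = c - b = d - c\<close> and \<open>d - a\<close> would be three
  times a power of two.\<close>

lemma power_two_less_power_two_iff: "(2::int) ^ m < 2 ^ n \<longleftrightarrow> m < n"
  by (rule power_strict_increasing_iff) simp

lemma power_two_add_power_two_eq_power_two_imp_eq:
  assumes "(2::int) ^ x + 2 ^ y = 2 ^ z"
  shows "x = y"
proof (rule ccontr)
  assume "x \<noteq> y"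
  then show False using assms
  proof (induction x y rule: linorder_wlog)
    case (le x y)
    then have "x < y" by simp
    then have "(2::int) ^ x < 2 ^ y" by (simp only: power_two_less_power_two_iff)
    moreover have "(0::int) < 2 ^ x" "(2::int) ^ Suc y = 2 ^ y + 2 ^ y" by simp_all
    ultimately have "(2::int) ^ y < 2 ^ z" "(2::int) ^ z < 2 ^ Suc y"
      using le.prems(2) by linarith+
    then show False by (simp only: power_two_less_power_two_iff)
  next
    case (sym x y)
    then show False by (simp add: add.commute)
  qed
qed

lemma three_times_power_two_neq_power_two: "(2::int) ^ z \<noteq> 3 * 2 ^ x"
proof
  assume eq: "(2::int) ^ z = 3 * 2 ^ x"
  have "(2::int) ^ Suc x < 2 ^ z" "(2::int) ^ z < 2 ^ Suc (Suc x)"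
    using eq by simp_all
  then show False by (simp only: power_two_less_power_two_iff)
qed

lemma no_four_integers_with_power_two_distances:
  fixes a b c d :: int
  assumes "b - a = 2 ^ x1" "c - b = 2 ^ x2" "c - a = 2 ^ x3"
    and "d - c = 2 ^ x4" "d - b = 2 ^ x5" "d - a = 2 ^ x6"
  shows False
proof -
  have "x1 = x2" using power_two_add_power_two_eq_power_two_imp_eq[of x1 x2 x3] assms by simp
  moreover have "x2 = x4" using power_two_add_power_two_eq_power_two_imp_eq[of x2 x4 x5] assms by simp
  ultimately have "(2::int) ^ x6 = 3 * 2 ^ x1" using assms by simp
  then show False using three_times_power_two_neq_power_two by blast
qed

lemma card_le_three_if_power_two_distances:
  fixes S :: "int set"
  assumes "finite S" and dist: "\<And>p q. p \<in> S \<Longrightarrow> q \<in> S \<Longrightarrow> p < q \<Longrightarrow> \<exists>j. q - p = 2 ^ j"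
  shows "card S \<le> 3"
proof (rule ccontr)
  assume "\<not> card S \<le> 3"
  then have "4 \<le> card S" by simp
  then obtain T where "T \<subseteq> S" "card T = 4" by (rule obtain_subset_with_card_n)
  then have "finite T" by (simp add: card_ge_0_finite)
  define xs where "xs = sorted_list_of_set T"
  have "length xs = 4" "sorted_wrt (<) xs" "set xs = T"
    using \<open>finite T\<close> \<open>card T = 4\<close> by (simp_all add: xs_def)
  then obtain a b c d where "xs = [a, b, c, d]"
    by (auto simp: numeral_eq_Suc length_Suc_conv)
  then have ord: "a < b" "b < c" "c < d" and mem: "a \<in> S" "b \<in> S" "c \<in> S" "d \<in> S"
    using \<open>sorted_wrt (<) xs\<close> \<open>set xs = T\<close> \<open>T \<subseteq> S\<close> by auto
  obtain x1 x2 x3 x4 x5 x6 where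
    "b - a = 2 ^ x1" "c - b = 2 ^ x2" "c - a = 2 ^ x3"
    "d - c = 2 ^ x4" "d - b = 2 ^ x5" "d - a = 2 ^ x6"
    using dist[OF mem(1,2)] dist[OF mem(2,3)] dist[OF mem(1,3)]
      dist[OF mem(3,4)] dist[OF mem(2,4)] dist[OF mem(1,4)] ord by fastforce
  then show False by (rule no_four_integers_with_power_two_distances)
qed

lemma even_prime_power_eq_power_two:
  assumes "prime (p::nat)" "even (int p ^ j)"
  shows "int p ^ j = 2 ^ j"
proof -
  have "even p" using assms(2) by simp
  then have "p = 2" using assms(1) prime_odd_nat prime_ge_2_nat by (metis le_neq_implies_less)
  then show ?thesis by simp
qed

lemma same_parity_labeling_distance_power_two:
  assumes "prime_kth_power_distance_labeling V complete_edges k L"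
    and "u \<in> V" "v \<in> V" "L u < L v" "even (L u) = even (L v)"
  shows "\<exists>j. L v - L u = 2 ^ j"
proof -
  have "v \<noteq> u" using assms(4) by auto
  then obtain p :: nat and j where p: "prime p" and dist: "\<bar>L v - L u\<bar> = int p ^ j"
    using assms(1-3) unfolding prime_kth_power_distance_labeling_def complete_edges_def by blast
  have "even (L v - L u)" using assms(5) by simp
  then have "even (int p ^ j)" using dist by (metis dvd_abs_iff)
  then show ?thesis using even_prime_power_eq_power_two[OF p] dist assms(4) by auto
qed

theorem mainTheorem9:
  fixes V :: "'a set" and k :: nat and L :: "'a \<Rightarrow> int"
  assumes "k \<ge> 1"
    and "finite V" and "card V = 4"
    and "prime_kth_power_distance_labeling V complete_edges k L"
  shows "\<not> (\<forall>u\<in>V. \<forall>v\<in>V. even (L u) = even (L v))"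
proof
  assume parity: "\<forall>u\<in>V. \<forall>v\<in>V. even (L u) = even (L v)"
  have "card (L ` V) \<le> 3"
  proof (rule card_le_three_if_power_two_distances)
    fix p q assume "p \<in> L ` V" "q \<in> L ` V" "p < q"
    then show "\<exists>j. q - p = 2 ^ j"
      using same_parity_labeling_distance_power_two[OF assms(4)] parity by blast
  qed (use assms(2) in simp)
  moreover have "inj_on L V"
    using assms(4) by (simp add: prime_kth_power_distance_labeling_def)
  ultimately show False using card_image assms(3) by fastforce
qed

end
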